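(* Let $\omega$ be uniformly distributed on $\{0,1\}^{[n]}$. For $\lambda\in(0,1)$ let $\ell_\lambda:=\lfloor n^\lambda\rfloor$, $m_\lambda:=\lfloor n/\ell_\lambda\rfloor$, partition the first $m_\lambda\ell_\lambda$ coordinates into consecutive blocks of length $\ell_\lambda$, let $S_j$ be the sum of coordinates in the $j$th block, and $S^\lambda:=\max_{1\le j\le m_\lambda}S_j$. For $\lambda,\beta\in(0,1)$ define $$s_{\lambda,\beta}:=\frac{\ell_\lambda}{2}+\frac{\sqrt{\ell_\lambda}}{2}\sqrt{2(1-\lambda)\log n-\log\log n-2\log\Big(\sqrt{4\pi(1-\lambda)}\,\log\beta^{-1}\Big)}.$$ Then for every $\lambda,\beta\in(0,1)$, $\mathbb{P}(S^\lambda\le s_{\lambda,\beta})\to\beta$ as $n\to\infty$. *)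

theory Defs
  imports "HOL-Probability.Probability"
begin

definition cube :: "nat \<Rightarrow> (nat \<Rightarrow> nat) set" where
  "cube n = PiE {..<n} (\<lambda>_. {0, 1})"

definition blen :: "real \<Rightarrow> nat \<Rightarrow> nat" where
  "blen lam n = nat \<lfloor>real n powr lam\<rfloor>"

definition nblocks :: "real \<Rightarrow> nat \<Rightarrow> nat" where
  "nblocks lam n = n div blen lam n"

definition block_sum :: "real \<Rightarrow> nat \<Rightarrow> (nat \<Rightarrow> nat) \<Rightarrow> nat \<Rightarrow> nat" where
  "block_sum lam n \<omega> j = (\<Sum>i\<in>{(j - 1) * blen lam n..<j * blen lam n}. \<omega> i)"

definition max_block :: "real \<Rightarrow> nat \<Rightarrow> (nat \<Rightarrow> nat) \<Rightarrow> nat" where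
  "max_block lam n \<omega> = Max (block_sum lam n \<omega> ` {1..nblocks lam n})"

definition thresh :: "real \<Rightarrow> real \<Rightarrow> nat \<Rightarrow> real" where
  "thresh lam \<beta> n =
     real (blen lam n) / 2 + sqrt (real (blen lam n)) / 2 *
       sqrt (2 * (1 - lam) * ln (real n) - ln (ln (real n))
             - 2 * ln (sqrt (4 * pi * (1 - lam)) * ln (1 / \<beta>)))"

end

theory Submission
  imports Defs "HOL-Real_Asymp.Real_Asymp"
begin

(* The m block sums are independent Binomial(l, 1/2) variables, so counting on the cube gives
   P(S <= s) = (1 - T)^m, where T is the binomial tail above s.  Writing
   s = l/2 + sqrt l / 2 * u, the deviation u grows like sqrt (2 (1 - lambda) log n), slowly
   enough that u^3 / sqrt l -> 0.  In this moderate deviation range the tail is Gaussian,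
   T ~ exp (-u^2/2) / (sqrt (2 pi) u): the tail sum is squeezed between geometric series in
   the ratio of consecutive terms, the term at the threshold is compared with the central
   one by a second order expansion of the logarithms of these ratios, and the central term
   is asymptotic to sqrt (2 / (pi l)) by the Gamma function asymptotics of (p - 1/2 choose p).
   The threshold is tuned so that m exp (-u^2/2) / (sqrt (2 pi) u) -> log (1/beta), whence
   (1 - T)^m -> exp (- log (1/beta)) = beta. *)

section \<open>Central binomial coefficients\<close>

lemma gbinomial_minus_half:
  "(real p - 1/2) gchoose p = real ((2*p) choose p) / 4^p"
proof -
  have "fact (2*p) = (4::real)^p * pochhammer (1/2) p * fact p"
    using pochhammer_double[of "1/2::real" p] by (simp add: pochhammer_fact power_mult)
  then show ?thesis
    by (simp add: gbinomial_pochhammer' binomial_fact field_simps)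
qed

lemma central_binomial_asymp:
  "(\<lambda>p. real ((2*p) choose p) / 4^p * sqrt (real p)) \<longlonglongrightarrow> 1 / sqrt pi"
proof -
  have lim: "(\<lambda>p. ((-1/2 + real p) gchoose p) * exp (- (-1/2) * ln (real p))) \<longlonglongrightarrow> rGamma (1/2)"
    using Gamma_gbinomial[of "-1/2 :: real"] by simp
  have "\<forall>\<^sub>F p in sequentially. ((-1/2 + real p) gchoose p) * exp (- (-1/2) * ln (real p))
                   = real ((2*p) choose p) / 4^p * sqrt (real p)"
    using eventually_gt_at_top[of "0::nat"]
  proof eventually_elim
    case (elim p)
    then have "exp (- (-1/2) * ln (real p)) = sqrt (real p)"
      by (simp add: powr_def flip: powr_half_sqrt)
    then show ?case using gbinomial_minus_half[of p] by simp
  qed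
  from Lim_transform_eventually[OF lim this] show ?thesis
    by (simp add: rGamma_inverse_Gamma Gamma_one_half_real inverse_eq_divide)
qed

lemma middle_binomial_eq_central:
  "real (l choose (l div 2)) / 2^l = real ((2 * (Suc l div 2)) choose (Suc l div 2)) / 4^(Suc l div 2)"
proof (cases "even l")
  case True
  then obtain p where "l = 2*p" by blast
  then show ?thesis by (simp add: power_mult)
next
  case False
  then obtain p where l: "l = 2*p+1" using oddE by blast
  have "2 * Suc p = Suc l" using l by simp
  then have "(2 * Suc p) choose (Suc p) = (l choose p) + (l choose Suc p)"
    by simp
  also have "l choose Suc p = l choose p"
    using central_binomial_odd[OF False] l by simp
  finally show ?thesis using l by (simp add: power_mult power_add)
qed

lemma middle_binomial_asymp:
  "(\<lambda>l. real (l choose (l div 2)) / 2^l * sqrt (real l)) \<longlonglongrightarrow> sqrt (2 / pi)"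
proof -
  define q where "q l = Suc l div 2" for l :: nat
  have q_at_top: "filterlim q at_top sequentially"
    unfolding filterlim_at_top
  proof
    fix N :: nat
    show "\<forall>\<^sub>F l in sequentially. N \<le> q l"
      using eventually_ge_at_top[of "2*N"] by eventually_elim (simp add: q_def)
  qed
  have central: "(\<lambda>l. real ((2 * q l) choose q l) / 4^(q l) * sqrt (real (q l))) \<longlonglongrightarrow> 1 / sqrt pi"
    using filterlim_compose[OF central_binomial_asymp q_at_top] by (simp add: o_def)
  have ratio: "(\<lambda>l. real l / real (q l)) \<longlonglongrightarrow> 2"
  proof (rule tendsto_sandwich)
    show "(\<lambda>l::nat. 2 * real l / (real l + 1)) \<longlonglongrightarrow> 2" by real_asymp
    show "\<forall>\<^sub>F l in sequentially. 2 * real l / (real l + 1) \<le> real l / real (q l)"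
      using eventually_gt_at_top[of "0::nat"]
    proof eventually_elim
      case (elim l)
      then have "2 * real (q l) \<le> real l + 1" "real (q l) > 0" unfolding q_def by linarith+
      moreover from this have "real l * (2 * real (q l)) \<le> real l * (real l + 1)"
        by (intro mult_left_mono) auto
      ultimately show ?case by (simp add: field_simps)
    qed
    show "\<forall>\<^sub>F l in sequentially. real l / real (q l) \<le> 2"
      using eventually_gt_at_top[of "0::nat"]
    proof eventually_elim
      case (elim l)
      then have "real l \<le> 2 * real (q l)" "real (q l) > 0" unfolding q_def by linarith+
      then show ?case by (simp add: field_simps)
    qed
  qed (rule tendsto_const)
  have lim: "(\<lambda>l. real ((2 * q l) choose q l) / 4^(q l) * sqrt (real (q l)) * sqrt (real l / real (q l)))
          \<longlonglongrightarrow> 1 / sqrt pi * sqrt 2"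
    by (intro tendsto_mult central tendsto_real_sqrt ratio)
  have "\<forall>\<^sub>F l in sequentially.
      real ((2 * q l) choose q l) / 4^(q l) * sqrt (real (q l)) * sqrt (real l / real (q l))
        = real (l choose (l div 2)) / 2^l * sqrt (real l)"
    using eventually_gt_at_top[of "0::nat"]
  proof eventually_elim
    case (elim l)
    then have "sqrt (real (q l)) * sqrt (real l / real (q l)) = sqrt (real l)"
      unfolding q_def by (simp flip: real_sqrt_mult)
    then show ?case using middle_binomial_eq_central[of l] unfolding q_def by (simp add: mult.assoc)
  qed
  from Lim_transform_eventually[OF lim this] show ?thesis
    by (simp add: real_sqrt_divide)
qed

section \<open>Symmetric binomial probabilities\<close>

definition sym_binom :: "nat \<Rightarrow> nat \<Rightarrow> real" where
  "sym_binom l k = real (l choose k) / 2^l"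

definition binom_ratio :: "nat \<Rightarrow> nat \<Rightarrow> real" where
  "binom_ratio l k = (real l - real k) / (real k + 1)"

lemma sym_binom_nonneg: "sym_binom l k \<ge> 0"
  by (simp add: sym_binom_def)

lemma sym_binom_pos: "k \<le> l \<Longrightarrow> sym_binom l k > 0"
  by (simp add: sym_binom_def)

lemma sym_binom_eq_0: "l < k \<Longrightarrow> sym_binom l k = 0"
  by (simp add: sym_binom_def)

lemma sum_sym_binom: "(\<Sum>k\<le>l. sym_binom l k) = 1"
  by (simp add: sym_binom_def flip: sum_divide_distrib of_nat_sum) (simp add: choose_row_sum)

lemma sym_binom_Suc: "sym_binom l (Suc k) = sym_binom l k * binom_ratio l k"
proof (cases "k < l")
  case True
  have "Suc k * (l choose Suc k) = (l - k) * (l choose k)"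
    using binomial_absorption[of k l] binomial_absorb_comp[of l k] by simp
  then have "real (Suc k) * real (l choose Suc k) = (real l - real k) * real (l choose k)"
    using True by (metis of_nat_diff of_nat_mult less_imp_le)
  then have "real (l choose Suc k) = real (l choose k) * ((real l - real k) / (real k + 1))"
    by (simp add: field_simps)
  then show ?thesis by (simp add: sym_binom_def binom_ratio_def)
next
  case False
  then have "k = l \<or> l < k" by auto
  then show ?thesis
  proof
    assume "l < k"
    then show ?thesis by (simp add: sym_binom_def binomial_eq_0)
  qed (simp add: sym_binom_def binom_ratio_def)
qed

lemma binom_ratio_nonneg: "k \<le> l \<Longrightarrow> binom_ratio l k \<ge> 0"
  by (simp add: binom_ratio_def)

lemma binom_ratio_antimono:
  assumes "k \<le> k'"
  shows "binom_ratio l k' \<le> binom_ratio l k"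
proof -
  have "(real l + 1) * (real k - real k') \<le> 0"
    using assms by (intro mult_nonneg_nonpos) auto
  then have "(real l - real k') * (real k + 1) \<le> (real l - real k) * (real k' + 1)"
    by (simp add: algebra_simps)
  then show ?thesis unfolding binom_ratio_def by (simp add: field_simps)
qed

lemma one_minus_binom_ratio: "1 - binom_ratio l k = (2 * real k + 1 - real l) / (real k + 1)"
  by (simp add: binom_ratio_def field_simps)

lemma sym_binom_tail_le:
  assumes "a \<le> l" "binom_ratio l a < 1"
  shows "(\<Sum>k=a..l. sym_binom l k) \<le> sym_binom l a / (1 - binom_ratio l a)"
proof -
  let ?r = "binom_ratio l a"
  have r0: "?r \<ge> 0" using assms by (simp add: binom_ratio_nonneg)
  have geometric: "sym_binom l (a+j) \<le> sym_binom l a * ?r ^ j" for j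
  proof (induction j)
    case (Suc j)
    show ?case
    proof (cases "a + j < l")
      case True
      have "sym_binom l (a + Suc j) = sym_binom l (a+j) * binom_ratio l (a+j)"
        by (simp add: sym_binom_Suc)
      also have "\<dots> \<le> (sym_binom l a * ?r ^ j) * ?r"
        using True r0 by (intro mult_mono Suc.IH binom_ratio_antimono) (auto simp: binom_ratio_nonneg sym_binom_nonneg)
      finally show ?thesis by (simp add: algebra_simps)
    qed (use r0 in \<open>simp add: sym_binom_eq_0 sym_binom_nonneg\<close>)
  qed simp
  have "(\<Sum>k=a..l. sym_binom l k) = (\<Sum>j<Suc (l-a). sym_binom l (a+j))"
    using assms(1) by (simp add: sum.atLeastAtMost_shift_0 atLeast0AtMost lessThan_Suc_atMost)
  also have "\<dots> \<le> sym_binom l a * (\<Sum>j<Suc (l-a). ?r ^ j)"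
    unfolding sum_distrib_left by (intro sum_mono geometric)
  also have "\<dots> = sym_binom l a * ((1 - ?r ^ Suc (l-a)) / (1 - ?r))"
    using assms(2) by (simp only: sum_gp_strict) simp
  also have "\<dots> \<le> sym_binom l a * (1 / (1 - ?r))"
    using assms r0 by (intro mult_left_mono divide_right_mono) (auto simp: sym_binom_nonneg)
  finally show ?thesis by simp
qed

lemma sym_binom_tail_ge:
  assumes "a + J \<le> l" "l \<le> 2*(a+J)"
  shows "sym_binom l a * ((1 - binom_ratio l (a+J) ^ Suc J) / (1 - binom_ratio l (a+J)))
           \<le> (\<Sum>k=a..l. sym_binom l k)"
proof -
  let ?r = "binom_ratio l (a+J)"
  have r0: "?r \<ge> 0" using assms by (simp add: binom_ratio_nonneg)
  have r1: "?r < 1" using assms(2) by (simp add: binom_ratio_def field_simps)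
  have geometric: "j \<le> J \<Longrightarrow> sym_binom l a * ?r ^ j \<le> sym_binom l (a+j)" for j
  proof (induction j)
    case (Suc j)
    have "sym_binom l a * ?r ^ Suc j = (sym_binom l a * ?r ^ j) * ?r" by (simp add: ac_simps)
    also have "\<dots> \<le> sym_binom l (a+j) * binom_ratio l (a+j)"
      using Suc r0 by (intro mult_mono binom_ratio_antimono) (auto simp: sym_binom_nonneg)
    finally show ?case by (simp add: sym_binom_Suc)
  qed simp
  have gp: "(\<Sum>j<n. ?r^j) = (1 - ?r^n) / (1 - ?r)" for n
    using r1 by (simp add: sum_gp_strict)
  have "sym_binom l a * ((1 - ?r ^ Suc J) / (1 - ?r)) = (\<Sum>j<Suc J. sym_binom l a * ?r ^ j)"
    by (simp only: gp flip: sum_distrib_left)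
  also have "\<dots> \<le> (\<Sum>j<Suc J. sym_binom l (a+j))"
    by (intro sum_mono geometric) auto
  also have "\<dots> \<le> (\<Sum>j<Suc (l-a). sym_binom l (a+j))"
    using assms by (intro sum_mono2) (auto simp: sym_binom_nonneg)
  also have "\<dots> = (\<Sum>k=a..l. sym_binom l k)"
    using assms by (simp add: sum.atLeastAtMost_shift_0 atLeast0AtMost lessThan_Suc_atMost)
  finally show ?thesis .
qed

lemma ln_binom_ratio_approx:
  assumes "real l / 2 - 1/2 \<le> real k" "4 * (real k - real l / 2 + 1) \<le> real l"
  shows "\<bar>ln (binom_ratio l k) + 2 * (2 * real k + 1 - real l) / real l\<bar>
           \<le> 16 * (real k - real l / 2 + 1)^2 / (real l)^2"
proof -
  define y1 where "y1 = (2 * real k - real l) / real l"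
  define y2 where "y2 = (2 * real k + 2 - real l) / real l"
  have lpos: "real l > 0" using assms by (simp add: field_simps)
  have y2: "0 < y2" "y2 \<le> 1/2" "\<bar>y1\<bar> \<le> y2"
    using assms lpos by (auto simp: y1_def y2_def field_simps)
  have num: "1 + (-y1) = (real l - real k) * (2 / real l)"
    and den: "1 + y2 = (real k + 1) * (2 / real l)"
    using lpos by (simp_all add: y1_def y2_def field_simps)
  have "binom_ratio l k = ((real l - real k) * (2 / real l)) / ((real k + 1) * (2 / real l))"
    using lpos unfolding binom_ratio_def by (subst mult_divide_mult_cancel_right) auto
  then have "binom_ratio l k = (1 + (-y1)) / (1 + y2)"
    unfolding num den .
  then have ln_eq: "ln (binom_ratio l k) = ln (1 + (-y1)) - ln (1 + y2)"
    using y2 by (simp add: ln_div)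
  have "\<bar>ln (1 + (-y1)) - (-y1)\<bar> \<le> 2 * (-y1)^2"
    using y2 by (intro abs_ln_one_plus_x_minus_x_bound) auto
  moreover have "\<bar>ln (1 + y2) - y2\<bar> \<le> 2 * y2^2"
    using y2 by (intro abs_ln_one_plus_x_minus_x_bound) auto
  moreover have "y1^2 \<le> y2^2"
    using y2 power_mono[of "\<bar>y1\<bar>" y2 2] by simp
  ultimately have "\<bar>ln (binom_ratio l k) + (y1 + y2)\<bar> \<le> 4 * y2^2"
    unfolding ln_eq by (simp add: abs_le_iff)
  moreover have "y1 + y2 = 2 * (2 * real k + 1 - real l) / real l"
    using lpos by (simp add: y1_def y2_def field_simps)
  moreover have "4 * y2^2 = 16 * (real k - real l / 2 + 1)^2 / (real l)^2"
    using lpos by (simp add: y2_def field_simps)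
  ultimately show ?thesis by simp
qed

lemma ln_sym_binom_local:
  assumes "l div 2 \<le> a" "4 * (real a - real l / 2 + 1) \<le> real l"
  shows "\<bar>ln (sym_binom l a) - ln (sym_binom l (l div 2)) + 2 * (real a - real l / 2)^2 / real l\<bar>
           \<le> 16 * (real a - real l / 2 + 1)^3 / (real l)^2 + 1 / real l"
proof -
  define c where "c = l div 2"
  define q where "q k = 2 * (real k - real l / 2)^2 / real l" for k :: nat
  define err where "err = 16 * (real a - real l / 2 + 1)^2 / (real l)^2"
  have c: "real l / 2 - 1/2 \<le> real c" "real c \<le> real l / 2" "c \<le> a"
    using assms(1) unfolding c_def by linarith+
  have lpos: "real l > 0" using assms(2) c by (simp add: field_simps)
  have step: "\<bar>(ln (sym_binom l (Suc k)) + q (Suc k)) - (ln (sym_binom l k) + q k)\<bar> \<le> err"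
    if k: "k \<in> {c..<a}" for k
  proof -
    have kl: "real l / 2 - 1/2 \<le> real k" "4 * (real k - real l / 2 + 1) \<le> real l"
      using k c assms(2) by auto
    then have "real k < real l" by (simp add: field_simps)
    then have "k < l" by simp
    moreover have "binom_ratio l k > 0"
      using \<open>k < l\<close> by (simp add: binom_ratio_def)
    ultimately have "ln (sym_binom l (Suc k)) = ln (sym_binom l k) + ln (binom_ratio l k)"
      using sym_binom_pos[of k l] unfolding sym_binom_Suc by (simp add: ln_mult)
    moreover have "q (Suc k) - q k = 2 * (2 * real k + 1 - real l) / real l"
      using lpos by (simp add: q_def field_simps power2_eq_square)
    moreover have "(real k - real l / 2 + 1)^2 \<le> (real a - real l / 2 + 1)^2"
      using k kl by (intro power_mono) auto
    then have "16 * (real k - real l / 2 + 1)^2 / (real l)^2 \<le> err"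
      unfolding err_def by (simp add: divide_right_mono)
    ultimately show ?thesis
      using ln_binom_ratio_approx[OF kl] by (simp add: algebra_simps)
  qed
  have "\<bar>(ln (sym_binom l a) + q a) - (ln (sym_binom l c) + q c)\<bar>
        = \<bar>\<Sum>k=c..<a. (ln (sym_binom l (Suc k)) + q (Suc k)) - (ln (sym_binom l k) + q k)\<bar>"
    using sum_Suc_diff'[OF c(3), of "\<lambda>k. ln (sym_binom l k) + q k"] by simp
  also have "\<dots> \<le> (\<Sum>k=c..<a. \<bar>(ln (sym_binom l (Suc k)) + q (Suc k)) - (ln (sym_binom l k) + q k)\<bar>)"
    by (rule sum_abs)
  also have "\<dots> \<le> real (a - c) * err"
    using sum_bounded_above[of "{c..<a}", OF step] by simp
  also have "\<dots> \<le> (real a - real l / 2 + 1) * err"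
    using c by (intro mult_right_mono) (auto simp: err_def)
  also have "\<dots> = 16 * (real a - real l / 2 + 1)^3 / (real l)^2"
    by (simp add: err_def power2_eq_square power3_eq_cube)
  finally have main: "\<bar>ln (sym_binom l a) - ln (sym_binom l c) + q a - q c\<bar>
                        \<le> 16 * (real a - real l / 2 + 1)^3 / (real l)^2"
    by (simp add: algebra_simps)
  have "\<bar>real c - real l / 2\<bar> \<le> 1/2"
    using c by linarith
  then have "(real c - real l / 2)^2 \<le> (1/2)^2"
    using power_mono[of "\<bar>real c - real l / 2\<bar>" "1/2" 2] by simp
  then have "0 \<le> q c" "q c \<le> 1 / real l"
    using lpos by (auto simp: q_def field_simps)
  with main show ?thesis unfolding c_def[symmetric] q_def[symmetric] by linarith
qed

lemma sym_binom_tail_ratio_le: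
  assumes "a \<le> l" "real l / 2 < real a"
  shows "(\<Sum>k=a..l. sym_binom l k) * (1 - binom_ratio l a) / sym_binom l a \<le> 1"
proof -
  have gap: "1 - binom_ratio l a > 0"
    using assms(2) by (simp add: one_minus_binom_ratio)
  then have "(\<Sum>k=a..l. sym_binom l k) \<le> sym_binom l a / (1 - binom_ratio l a)"
    using assms(1) by (intro sym_binom_tail_le) auto
  then show ?thesis
    using gap sym_binom_pos[OF assms(1)] by (simp add: field_simps)
qed

lemma binom_ratio_gap_quotient:
  assumes "real l / 2 < real a"
  shows "1 - real J / (real a - real l / 2) \<le> (1 - binom_ratio l a) / (1 - binom_ratio l (a + J))"
proof -
  define t where "t = real a - real l / 2"
  have t: "t > 0" using assms by (simp add: t_def)
  have gap_a: "1 - binom_ratio l a = (2*t + 1) / (real a + 1)"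
    and gap_aJ: "1 - binom_ratio l (a + J) = (2*t + 2 * real J + 1) / (real a + real J + 1)"
    by (simp_all add: one_minus_binom_ratio t_def)
  have "1 - real J / t \<le> (2*t + 1) / (2*t + 2 * real J + 1)"
  proof -
    have "(t - real J) * (2*t + 2 * real J + 1) \<le> (2*t + 1) * t"
      by (simp add: algebra_simps)
    then show ?thesis using t by (simp add: field_simps)
  qed
  also have "\<dots> \<le> (2*t + 1) / (2*t + 2 * real J + 1) * ((real a + real J + 1) / (real a + 1))"
  proof -
    have nonneg: "0 \<le> (2*t + 1) / (2*t + 2 * real J + 1)" using t by simp
    show ?thesis
      by (rule mult_le_cancel_left1[THEN iffD2], intro conjI impI) (use nonneg in auto)
  qed
  also have "\<dots> = (1 - binom_ratio l a) / (1 - binom_ratio l (a + J))"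
    unfolding gap_a gap_aJ using t by (simp add: field_simps)
  finally show ?thesis unfolding t_def .
qed

lemma sym_binom_tail_ratio_ge:
  fixes l a :: nat
  defines "v \<equiv> 2 * (real a - real l / 2) / sqrt (real l)"
  assumes l16: "16 \<le> real l" and half: "real l / 2 < real a"
    and room: "real a + sqrt (real l) \<le> real l"
  shows "1 - 6 / v \<le> (\<Sum>k=a..l. sym_binom l k) * (1 - binom_ratio l a) / sym_binom l a"
proof -
  define t where "t = real a - real l / 2"
  define J where "J = nat \<lfloor>sqrt (real l)\<rfloor>"
  define \<rho> where "\<rho> = binom_ratio l (a + J)"
  define P where "P = \<rho> ^ Suc J"
  have sqrt_l: "4 \<le> sqrt (real l)" "sqrt (real l) * sqrt (real l) = real l"
    using l16 real_sqrt_le_mono[of 16 "real l"] by auto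
  have J: "real J \<le> sqrt (real l)" "sqrt (real l) / 2 \<le> real J"
    using sqrt_l unfolding J_def by linarith+
  have t: "t > 0" "v = 2 * t / sqrt (real l)"
    using half by (simp_all add: t_def v_def)
  have v: "v > 0"
    unfolding t(2) using t(1) sqrt_l l16 by (intro divide_pos_pos) auto
  have aJ: "a + J \<le> l" "l \<le> 2 * (a + J)"
    using room half J by (simp_all add: of_nat_le_iff[symmetric] del: of_nat_le_iff)
  have "0 < 1 - \<rho>"
    using half unfolding \<rho>_def one_minus_binom_ratio by simp
  then have rho: "0 \<le> \<rho>" "\<rho> < 1"
    using aJ by (auto simp: \<rho>_def binom_ratio_nonneg)
  have gap_a: "0 < 1 - binom_ratio l a"
    using half by (simp add: one_minus_binom_ratio)
  have "sym_binom l a * ((1 - P) / (1 - \<rho>)) \<le> (\<Sum>k=a..l. sym_binom l k)"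
    unfolding P_def \<rho>_def by (rule sym_binom_tail_ge[OF aJ])
  then have "sym_binom l a * ((1 - P) / (1 - \<rho>)) * (1 - binom_ratio l a)
               \<le> (\<Sum>k=a..l. sym_binom l k) * (1 - binom_ratio l a)"
    using gap_a by (intro mult_right_mono) auto
  then have lower: "(1 - P) * ((1 - binom_ratio l a) / (1 - \<rho>))
                      \<le> (\<Sum>k=a..l. sym_binom l k) * (1 - binom_ratio l a) / sym_binom l a"
    using sym_binom_pos[of a l] aJ by (simp add: field_simps)
  have "1 - 2 / v \<le> 1 - real J / t"
    using J t sqrt_l by (simp add: field_simps)
  also have "\<dots> \<le> (1 - binom_ratio l a) / (1 - \<rho>)"
    unfolding \<rho>_def t_def by (rule binom_ratio_gap_quotient[OF half])
  finally have quotient: "1 - 2 / v \<le> (1 - binom_ratio l a) / (1 - \<rho>)" .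
  \<comment> \<open>the geometric factor \<rho>^(J+1) is at most exp (-v/4) \<le> 4/v\<close>
  have "t / real l \<le> 1 - \<rho>"
  proof -
    have "real (a + J) \<le> real l"
      using aJ(1) by (simp only: of_nat_le_iff)
    then have "2 * t / (2 * real l) \<le> 2 * t / (real a + real J + 1)"
      using l16 t by (intro divide_left_mono) auto
    also have "\<dots> \<le> (2 * t + 2 * real J + 1) / (real a + real J + 1)"
      by (intro divide_right_mono) auto
    also have "\<dots> = 1 - \<rho>"
      by (simp add: \<rho>_def one_minus_binom_ratio t_def)
    finally show ?thesis by simp
  qed
  then have "t / real l * (sqrt (real l) / 2) \<le> (1 - \<rho>) * real J"
    using J t rho by (intro mult_mono) auto
  moreover have "t / real l * (sqrt (real l) / 2) = v / 4"
  proof -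
    have "sqrt (real l) / real l = 1 / sqrt (real l)"
      by (simp add: sqrt_divide_self_eq inverse_eq_divide)
    then have "t / real l * (sqrt (real l) / 2) = t / 2 * (1 / sqrt (real l))"
      by (metis times_divide_eq_left times_divide_eq_right mult.commute)
    then show ?thesis by (simp add: t(2))
  qed
  ultimately have "v / 4 \<le> (1 - \<rho>) * real J" by linarith
  have "P \<le> \<rho> ^ J" unfolding P_def using rho by (intro power_decreasing) auto
  also have "\<dots> \<le> exp (\<rho> - 1) ^ J"
    using rho exp_ge_add_one_self[of "\<rho> - 1"] by (intro power_mono) auto
  also have "\<dots> = exp (- ((1 - \<rho>) * real J))"
    by (simp add: algebra_simps flip: exp_of_nat_mult)
  also have "\<dots> \<le> exp (- v / 4)"
    using \<open>v / 4 \<le> (1 - \<rho>) * real J\<close> by simp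
  also have "\<dots> \<le> 4 / v"
    using exp_ge_add_one_self[of "v / 4"] v by (simp add: exp_minus field_simps)
  finally have P: "P \<le> 4 / v" .
  have "0 \<le> P" "P \<le> 1"
    unfolding P_def using rho by (simp, intro power_le_one) auto
  moreover have "(1 - P) * (1 - 2 / v) = 1 - 2 / v - P + P * (2 / v)"
    using v by (simp add: field_simps)
  moreover have "0 \<le> P * (2 / v)" "6 / v = 2 / v + 4 / v"
    using \<open>0 \<le> P\<close> v by simp_all
  ultimately have "1 - 6 / v \<le> (1 - P) * (1 - 2 / v)"
    using P by linarith
  also have "\<dots> \<le> (1 - P) * ((1 - binom_ratio l a) / (1 - \<rho>))"
    using quotient \<open>P \<le> 1\<close> by (intro mult_left_mono) auto
  finally show ?thesis using lower by linarith
qed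

lemma ln_sym_binom_local_rescaled:
  fixes l a :: nat
  defines "v \<equiv> 2 * (real a - real l / 2) / sqrt (real l)"
  assumes "l div 2 \<le> a" "4 * (real a - real l / 2 + 1) \<le> real l" "1 \<le> real a - real l / 2"
  shows "\<bar>ln (sym_binom l a) - ln (sym_binom l (l div 2)) + v^2 / 2\<bar>
           \<le> 16 * v^3 / sqrt (real l) + 1 / real l"
proof -
  define t where "t = real a - real l / 2"
  have lpos: "real l > 0" using assms(3,4) by (simp add: field_simps)
  have sq: "sqrt (real l) ^ 2 = real l"
    using lpos by simp
  have "v^2 / 2 = 2 * t^2 / real l"
    unfolding v_def t_def[symmetric] using sq by (simp add: power_divide power_mult_distrib)
  moreover have "16 * (t + 1)^3 / (real l)^2 \<le> 16 * v^3 / sqrt (real l)"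
  proof -
    have "(t + 1)^3 \<le> (2 * t)^3"
      using assms(4) by (intro power_mono) (auto simp: t_def)
    moreover have rescale: "16 * (2 * t / s)^3 / s = 16 * (2 * t)^3 / (s^2)^2" if "s > 0" for s :: real
      using that by (simp add: divide_simps) algebra
    have "16 * v^3 / sqrt (real l) = 16 * (2 * t)^3 / (sqrt (real l) ^ 2)^2"
      unfolding v_def t_def[symmetric] by (rule rescale) (use lpos in simp)
    then have "16 * v^3 / sqrt (real l) = 16 * (2 * t)^3 / (real l)^2"
      unfolding sq .
    ultimately show ?thesis by (simp add: divide_right_mono)
  qed
  ultimately show ?thesis
    using ln_sym_binom_local[OF assms(2,3)] unfolding t_def by linarith
qed

section \<open>Moderate deviations of the binomial tail\<close>

lemma tendsto_div_of_cube_div: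
  fixes f g :: "nat \<Rightarrow> real"
  assumes "(\<lambda>n. f n ^ 3 / g n) \<longlonglongrightarrow> 0" "\<forall>\<^sub>F n in sequentially. 1 \<le> f n" "\<And>n. 0 \<le> g n"
  shows "(\<lambda>n. f n / g n) \<longlonglongrightarrow> 0"
proof (rule tendsto_sandwich[OF _ _ tendsto_const assms(1)])
  show "\<forall>\<^sub>F n in sequentially. 0 \<le> f n / g n"
    using assms(2) by eventually_elim (use assms(3) in simp)
  show "\<forall>\<^sub>F n in sequentially. f n / g n \<le> f n ^ 3 / g n"
    using assms(2) by eventually_elim (use assms(3) in \<open>simp add: divide_right_mono power_increasing[of 1 3, simplified]\<close>)
qed

lemma one_minus_binom_ratio_rescaled:
  fixes l a :: nat
  defines "v \<equiv> 2 * (real a - real l / 2) / sqrt (real l)"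
  assumes "0 < l" "real l / 2 < real a"
  shows "(1 - binom_ratio l a) * sqrt (real l) / v
           = (1 + 1 / (v * sqrt (real l))) / (1/2 + v / (2 * sqrt (real l)) + 1 / real l)"
proof -
  define s where "s = sqrt (real l)"
  have s: "s > 0" "s * s = real l" using assms(2) by (simp_all add: s_def)
  have a: "real a = s * s / 2 + v * s / 2"
    using s by (simp add: v_def s_def[symmetric] field_simps)
  have v: "v > 0" using assms(3) s by (simp add: v_def s_def[symmetric])
  have "2 * real a + 1 - real l = v * s + 1" "real a + 1 = s * s / 2 + v * s / 2 + 1"
    using a s(2) by simp_all
  then have "(1 - binom_ratio l a) * s / v = (v * s + 1) / (s * s / 2 + v * s / 2 + 1) * s / v"
    by (simp add: one_minus_binom_ratio)
  also have "\<dots> = (1 + 1 / (v * s)) / (1/2 + v / (2 * s) + 1 / (s * s))"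
    using v s(1) by (simp add: divide_simps) algebra
  finally show ?thesis unfolding s(2) by (simp add: s_def)
qed

text \<open>Here \<open>v n\<close> is the deviation of \<open>a n\<close> from the mean \<open>l n / 2\<close>, measured in units of
  the standard deviation \<open>sqrt (l n) / 2\<close>.\<close>

locale moderate_deviation =
  fixes l a :: "nat \<Rightarrow> nat" and v :: "nat \<Rightarrow> real"
  assumes v_eq: "\<And>n. v n = 2 * (real (a n) - real (l n) / 2) / sqrt (real (l n))"
    and l_at_top: "filterlim l at_top sequentially"
    and v_at_top: "filterlim v at_top sequentially"
    and v_cube_small: "(\<lambda>n. v n ^ 3 / sqrt (real (l n))) \<longlonglongrightarrow> 0"
begin

lemma real_l_at_top: "filterlim (\<lambda>n. real (l n)) at_top sequentially"
  using filterlim_compose[OF filterlim_real_sequentially l_at_top] by (simp add: o_def)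

lemma sqrt_l_at_top: "filterlim (\<lambda>n. sqrt (real (l n))) at_top sequentially"
  using filterlim_compose[OF sqrt_at_top real_l_at_top] by (simp add: o_def)

lemma v_small: "(\<lambda>n. v n / sqrt (real (l n))) \<longlonglongrightarrow> 0"
  using v_at_top by (intro tendsto_div_of_cube_div[OF v_cube_small]) (auto simp: filterlim_at_top)

lemma eventually_regime:
  "\<forall>\<^sub>F n in sequentially. 16 \<le> real (l n) \<and> 0 < v n \<and> real (l n) / 2 + 1 \<le> real (a n)
     \<and> real (a n) + sqrt (real (l n)) \<le> real (l n) \<and> 4 * (real (a n) - real (l n) / 2 + 1) \<le> real (l n)"
proof -
  have "\<forall>\<^sub>F n in sequentially. 256 \<le> real (l n)" "\<forall>\<^sub>F n in sequentially. 8 \<le> v n"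
    using real_l_at_top v_at_top unfolding filterlim_at_top by blast+
  moreover have "\<forall>\<^sub>F n in sequentially. v n / sqrt (real (l n)) < 1/128"
    by (rule order_tendstoD(2)[OF v_small]) simp
  ultimately show ?thesis
  proof eventually_elim
    case (elim n)
    define s where "s = sqrt (real (l n))"
    have s: "16 \<le> s" "s * s = real (l n)"
      using elim real_sqrt_le_mono[of 256 "real (l n)"] by (auto simp: s_def)
    have a: "real (a n) = real (l n) / 2 + v n * s / 2"
      using s by (simp add: v_eq s_def[symmetric] field_simps)
    have "8 * 16 \<le> v n * s"
      using elim s by (intro mult_mono) auto
    moreover have "v n * s \<le> s / 128 * s"
      using elim s by (intro mult_right_mono) (auto simp: s_def field_simps)
    moreover have "16 * s \<le> s * s"
      using s by (intro mult_right_mono) auto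
    ultimately show ?case
      using elim s unfolding s_def[symmetric] a by (simp add: algebra_simps)
  qed
qed

abbreviation tail :: "nat \<Rightarrow> real" where
  "tail n \<equiv> \<Sum>k=a n..l n. sym_binom (l n) k"

lemma tail_ratio_tendsto:
  "(\<lambda>n. tail n * (1 - binom_ratio (l n) (a n)) / sym_binom (l n) (a n)) \<longlonglongrightarrow> 1"
proof (rule tendsto_sandwich[OF _ _ _ tendsto_const])
  show "(\<lambda>n. 1 - 6 / v n) \<longlonglongrightarrow> 1"
    using tendsto_diff[OF tendsto_const[of 1]
        tendsto_divide_0[OF tendsto_const[of 6] filterlim_at_top_imp_at_infinity[OF v_at_top]]]
    by simp
  show "\<forall>\<^sub>F n in sequentially.
          1 - 6 / v n \<le> tail n * (1 - binom_ratio (l n) (a n)) / sym_binom (l n) (a n)"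
    using eventually_regime
    by eventually_elim (use v_eq sym_binom_tail_ratio_ge in auto)
  show "\<forall>\<^sub>F n in sequentially.
          tail n * (1 - binom_ratio (l n) (a n)) / sym_binom (l n) (a n) \<le> 1"
    using eventually_regime
    by eventually_elim (intro sym_binom_tail_ratio_le, auto simp flip: of_nat_le_iff)
qed

lemma local_ratio_tendsto:
  "(\<lambda>n. sym_binom (l n) (a n) * exp (v n ^ 2 / 2) / sym_binom (l n) (l n div 2)) \<longlonglongrightarrow> 1"
proof -
  define E where "E n = ln (sym_binom (l n) (a n)) - ln (sym_binom (l n) (l n div 2)) + v n ^ 2 / 2" for n
  have "E \<longlonglongrightarrow> 0"
  proof (rule Lim_null_comparison)
    show "\<forall>\<^sub>F n in sequentially. norm (E n) \<le> 16 * (v n ^ 3 / sqrt (real (l n))) + 1 / real (l n)"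
      using eventually_regime
    proof eventually_elim
      case (elim n)
      then have "l n div 2 \<le> a n" by linarith
      with elim show ?case
        using ln_sym_binom_local_rescaled[of "l n" "a n"] by (simp add: E_def v_eq)
    qed
    show "(\<lambda>n. 16 * (v n ^ 3 / sqrt (real (l n))) + 1 / real (l n)) \<longlonglongrightarrow> 0"
      using tendsto_mult_right_zero[OF v_cube_small, of 16]
        tendsto_divide_0[OF tendsto_const[of 1] filterlim_at_top_imp_at_infinity[OF real_l_at_top]]
      by (simp add: tendsto_add_zero)
  qed
  then have "(\<lambda>n. exp (E n)) \<longlonglongrightarrow> 1" using tendsto_exp by fastforce
  moreover have "\<forall>\<^sub>F n in sequentially.
      exp (E n) = sym_binom (l n) (a n) * exp (v n ^ 2 / 2) / sym_binom (l n) (l n div 2)"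
    using eventually_regime
  proof eventually_elim
    case (elim n)
    then have "a n \<le> l n" by (simp flip: of_nat_le_iff)
    then show ?case
      using sym_binom_pos[of "l n div 2" "l n"] sym_binom_pos[of "a n" "l n"]
      by (simp add: E_def exp_add exp_diff)
  qed
  ultimately show ?thesis by (rule Lim_transform_eventually)
qed

lemma gap_tendsto: "(\<lambda>n. (1 - binom_ratio (l n) (a n)) * sqrt (real (l n)) / v n) \<longlonglongrightarrow> 2"
proof -
  have inv: "(\<lambda>n. 1 / f n) \<longlonglongrightarrow> 0" if "filterlim f at_top sequentially" for f :: "nat \<Rightarrow> real"
    using tendsto_inverse_0_at_top[OF that] by (simp add: inverse_eq_divide)
  have "(\<lambda>n. 1 / (v n * sqrt (real (l n)))) \<longlonglongrightarrow> 0"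
    using tendsto_mult[OF inv[OF v_at_top] inv[OF sqrt_l_at_top]] by simp
  moreover have "(\<lambda>n. v n / (2 * sqrt (real (l n)))) \<longlonglongrightarrow> 0"
    using tendsto_mult_right_zero[OF v_small, of "1/2"] by simp
  ultimately have "(\<lambda>n. (1 + 1 / (v n * sqrt (real (l n))))
                       / (1/2 + v n / (2 * sqrt (real (l n))) + 1 / real (l n)))
                     \<longlonglongrightarrow> (1 + 0) / (1/2 + 0 + 0)"
    by (intro tendsto_divide tendsto_add tendsto_const inv[OF real_l_at_top]) simp_all
  moreover have "\<forall>\<^sub>F n in sequentially.
      (1 + 1 / (v n * sqrt (real (l n)))) / (1/2 + v n / (2 * sqrt (real (l n))) + 1 / real (l n))
        = (1 - binom_ratio (l n) (a n)) * sqrt (real (l n)) / v n"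
    using eventually_regime
  proof eventually_elim
    case (elim n)
    then show ?case
      using one_minus_binom_ratio_rescaled[of "l n" "a n"] unfolding v_eq[symmetric] by simp
  qed
  ultimately show ?thesis by (simp add: Lim_transform_eventually)
qed

theorem tail_asymp: "(\<lambda>n. tail n * v n * exp (v n ^ 2 / 2)) \<longlonglongrightarrow> 1 / sqrt (2 * pi)"
proof -
  have middle: "(\<lambda>n. sym_binom (l n) (l n div 2) * sqrt (real (l n))) \<longlonglongrightarrow> sqrt (2 / pi)"
    using filterlim_compose[OF middle_binomial_asymp l_at_top] by (simp add: o_def sym_binom_def)
  have "1 * 1 * sqrt (2 / pi) / 2 = 1 / sqrt (2 * pi)"
    by (simp add: real_sqrt_divide real_sqrt_mult field_simps)
  moreover have "(\<lambda>n. (tail n * (1 - binom_ratio (l n) (a n)) / sym_binom (l n) (a n))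
            * (sym_binom (l n) (a n) * exp (v n ^ 2 / 2) / sym_binom (l n) (l n div 2))
            * (sym_binom (l n) (l n div 2) * sqrt (real (l n)))
            / ((1 - binom_ratio (l n) (a n)) * sqrt (real (l n)) / v n))
          \<longlonglongrightarrow> 1 * 1 * sqrt (2 / pi) / 2"
    by (intro tendsto_intros tail_ratio_tendsto local_ratio_tendsto middle gap_tendsto) simp
  moreover have "\<forall>\<^sub>F n in sequentially.
      (tail n * (1 - binom_ratio (l n) (a n)) / sym_binom (l n) (a n))
        * (sym_binom (l n) (a n) * exp (v n ^ 2 / 2) / sym_binom (l n) (l n div 2))
        * (sym_binom (l n) (l n div 2) * sqrt (real (l n)))
        / ((1 - binom_ratio (l n) (a n)) * sqrt (real (l n)) / v n)
      = tail n * v n * exp (v n ^ 2 / 2)"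
    using eventually_regime
  proof eventually_elim
    case (elim n)
    then have "a n \<le> l n" by (simp flip: of_nat_le_iff)
    moreover have "1 - binom_ratio (l n) (a n) > 0"
      using elim by (simp add: one_minus_binom_ratio)
    ultimately show ?case
      using elim sym_binom_pos[of "l n div 2" "l n"] sym_binom_pos[of "a n" "l n"]
      by (simp add: field_simps)
  qed
  ultimately show ?thesis by (simp add: Lim_transform_eventually)
qed

end

lemma gauss_factor_ratio_tendsto:
  fixes u v \<epsilon> :: "nat \<Rightarrow> real"
  assumes close: "\<forall>\<^sub>F n in sequentially. 1 \<le> u n \<and> u n \<le> v n \<and> v n \<le> u n + \<epsilon> n"
    and eps: "\<epsilon> \<longlonglongrightarrow> 0" "(\<lambda>n. u n * \<epsilon> n) \<longlonglongrightarrow> 0"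
  shows "(\<lambda>n. u n * exp (u n ^ 2 / 2) / (v n * exp (v n ^ 2 / 2))) \<longlonglongrightarrow> 1"
proof -
  have "(\<lambda>n. v n ^ 2 - u n ^ 2) \<longlonglongrightarrow> 0"
  proof (rule tendsto_sandwich[OF _ _ tendsto_const])
    show "(\<lambda>n. 2 * (u n * \<epsilon> n) + \<epsilon> n * \<epsilon> n) \<longlonglongrightarrow> 0"
      using tendsto_add[OF tendsto_mult_right_zero[OF eps(2)] tendsto_mult_zero[OF eps(1) eps(1)]] by simp
    show "\<forall>\<^sub>F n in sequentially. 0 \<le> v n ^ 2 - u n ^ 2"
      using close by eventually_elim (simp add: power_mono)
    show "\<forall>\<^sub>F n in sequentially. v n ^ 2 - u n ^ 2 \<le> 2 * (u n * \<epsilon> n) + \<epsilon> n * \<epsilon> n"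
      using close
    proof eventually_elim
      case (elim n)
      then have "v n ^ 2 \<le> (u n + \<epsilon> n) ^ 2" by (intro power_mono) auto
      then show ?case by (simp add: power2_eq_square algebra_simps)
    qed
  qed
  moreover have "(\<lambda>n. u n / v n) \<longlonglongrightarrow> 1"
  proof (rule tendsto_sandwich[OF _ _ _ tendsto_const])
    show "(\<lambda>n. 1 - \<epsilon> n) \<longlonglongrightarrow> 1"
      using tendsto_diff[OF tendsto_const[of 1] eps(1)] by simp
    show "\<forall>\<^sub>F n in sequentially. 1 - \<epsilon> n \<le> u n / v n"
      using close
    proof eventually_elim
      case (elim n)
      then have "(v n - u n) / v n \<le> v n - u n"
        by (simp add: divide_le_eq mult_le_cancel_left1)
      with elim show ?case by (simp add: diff_divide_distrib)
    qed
    show "\<forall>\<^sub>F n in sequentially. u n / v n \<le> 1"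
      using close by eventually_elim simp
  qed
  ultimately have "(\<lambda>n. u n / v n * exp (- (v n ^ 2 - u n ^ 2) / 2)) \<longlonglongrightarrow> 1 * exp (- 0 / 2)"
    by (intro tendsto_intros) auto
  moreover have "\<forall>\<^sub>F n in sequentially.
      u n / v n * exp (- (v n ^ 2 - u n ^ 2) / 2) = u n * exp (u n ^ 2 / 2) / (v n * exp (v n ^ 2 / 2))"
    using close
  proof eventually_elim
    case (elim n)
    have exponent: "- (v n ^ 2 - u n ^ 2) / 2 = u n ^ 2 / 2 - v n ^ 2 / 2" by (simp add: field_simps)
    show ?case unfolding exponent exp_diff by simp
  qed
  ultimately show ?thesis by (simp add: Lim_transform_eventually)
qed

lemma sym_binom_tail_above_threshold:
  fixes l :: "nat \<Rightarrow> nat" and u :: "nat \<Rightarrow> real"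
  defines "a \<equiv> \<lambda>n. nat (\<lfloor>real (l n) / 2 + sqrt (real (l n)) / 2 * u n\<rfloor> + 1)"
  assumes l_at_top: "filterlim l at_top sequentially"
    and u_at_top: "filterlim u at_top sequentially"
    and u_cube_small: "(\<lambda>n. u n ^ 3 / sqrt (real (l n))) \<longlonglongrightarrow> 0"
  shows "(\<lambda>n. (\<Sum>k=a n..l n. sym_binom (l n) k) * u n * exp (u n ^ 2 / 2)) \<longlonglongrightarrow> 1 / sqrt (2 * pi)"
proof -
  define v where "v n = 2 * (real (a n) - real (l n) / 2) / sqrt (real (l n))" for n
  define \<epsilon> where "\<epsilon> n = 2 / sqrt (real (l n))" for n
  have sqrt_l: "filterlim (\<lambda>n. sqrt (real (l n))) at_top sequentially"
    using filterlim_compose[OF sqrt_at_top filterlim_compose[OF filterlim_real_sequentially l_at_top]]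
    by (simp add: o_def)
  have eps: "\<epsilon> \<longlonglongrightarrow> 0"
    unfolding \<epsilon>_def by (rule tendsto_divide_0[OF tendsto_const filterlim_at_top_imp_at_infinity[OF sqrt_l]])
  have "\<forall>\<^sub>F n in sequentially. 1 \<le> u n" "\<forall>\<^sub>F n in sequentially. 4 \<le> sqrt (real (l n))"
    using u_at_top sqrt_l unfolding filterlim_at_top by blast+
  then have ev: "\<forall>\<^sub>F n in sequentially. 1 \<le> u n \<and> 4 \<le> sqrt (real (l n))"
    by (rule eventually_conj)
  have u_small: "(\<lambda>n. u n / sqrt (real (l n))) \<longlonglongrightarrow> 0"
    by (rule tendsto_div_of_cube_div[OF u_cube_small]) (use ev in \<open>auto elim: eventually_mono\<close>)
  have u_eps: "(\<lambda>n. u n * \<epsilon> n) \<longlonglongrightarrow> 0"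
    using tendsto_mult_right_zero[OF u_small, where c = 2] by (simp add: \<epsilon>_def ac_simps)
  \<comment> \<open>rounding the threshold up to the lattice moves the rescaled deviation by at most \<epsilon>\<close>
  have close: "\<forall>\<^sub>F n in sequentially. 1 \<le> u n \<and> u n \<le> v n \<and> v n \<le> u n + \<epsilon> n \<and> \<epsilon> n \<le> 1"
    using ev
  proof eventually_elim
    case (elim n)
    define s where "s = real (l n) / 2 + sqrt (real (l n)) / 2 * u n"
    have "0 \<le> s" using elim by (simp add: s_def)
    then have a: "s < real (a n)" "real (a n) \<le> s + 1"
      unfolding a_def s_def[symmetric] by linarith+
    have "sqrt (real (l n)) > 0" using elim by linarith
    then have "v n = u n + \<epsilon> n * (real (a n) - s)"
      by (simp add: v_def \<epsilon>_def s_def field_simps)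
    moreover have "0 \<le> \<epsilon> n" "\<epsilon> n \<le> 1"
      using elim \<open>sqrt (real (l n)) > 0\<close> by (simp_all add: \<epsilon>_def field_simps)
    ultimately show ?case
      using elim a mult_left_mono[of "real (a n) - s" 1 "\<epsilon> n"] by auto
  qed
  interpret moderate_deviation l a v
  proof
    show "filterlim v at_top sequentially"
      by (rule filterlim_at_top_mono[OF u_at_top]) (use close in \<open>eventually_elim, simp\<close>)
    show "(\<lambda>n. v n ^ 3 / sqrt (real (l n))) \<longlonglongrightarrow> 0"
    proof (rule tendsto_sandwich[OF _ _ tendsto_const tendsto_mult_right_zero[OF u_cube_small, of 8]])
      show "\<forall>\<^sub>F n in sequentially. 0 \<le> v n ^ 3 / sqrt (real (l n))"
        using close by eventually_elim simp
      show "\<forall>\<^sub>F n in sequentially. v n ^ 3 / sqrt (real (l n)) \<le> 8 * (u n ^ 3 / sqrt (real (l n)))"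
        using close
      proof eventually_elim
        case (elim n)
        then have "v n ^ 3 \<le> (2 * u n) ^ 3" by (intro power_mono) auto
        then show ?case by (simp add: divide_right_mono)
      qed
    qed
  qed (simp_all add: v_def l_at_top)
  have "(\<lambda>n. (tail n * v n * exp (v n ^ 2 / 2)) * (u n * exp (u n ^ 2 / 2) / (v n * exp (v n ^ 2 / 2))))
          \<longlonglongrightarrow> 1 / sqrt (2 * pi) * 1"
    using close by (intro tendsto_mult tail_asymp gauss_factor_ratio_tendsto[OF _ eps u_eps])
      (auto elim: eventually_mono)
  moreover have "\<forall>\<^sub>F n in sequentially.
      (tail n * v n * exp (v n ^ 2 / 2)) * (u n * exp (u n ^ 2 / 2) / (v n * exp (v n ^ 2 / 2)))
        = tail n * u n * exp (u n ^ 2 / 2)"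
    using close by eventually_elim simp
  ultimately show ?thesis by (simp add: Lim_transform_eventually)
qed

section \<open>Maxima of block sums\<close>

lemma tendsto_one_minus_power:
  fixes T :: "nat \<Rightarrow> real" and m :: "nat \<Rightarrow> nat"
  assumes mT: "(\<lambda>n. real (m n) * T n) \<longlonglongrightarrow> c" and T: "T \<longlonglongrightarrow> 0" "\<And>n. 0 \<le> T n"
  shows "(\<lambda>n. (1 - T n) ^ m n) \<longlonglongrightarrow> exp (- c)"
proof -
  have small: "\<forall>\<^sub>F n in sequentially. T n < 1/2"
    using order_tendstoD(2)[OF T(1), of "1/2"] by simp
  \<comment> \<open>-x - 2x^2 \<le> ln (1 - x) \<le> -x squeezes m ln (1 - T) between -mT - 2 (mT) T and -mT\<close>
  have "(\<lambda>n. real (m n) * ln (1 - T n)) \<longlonglongrightarrow> - c"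
  proof (rule tendsto_sandwich)
    show "(\<lambda>n. - (real (m n) * T n) - 2 * ((real (m n) * T n) * T n)) \<longlonglongrightarrow> - c"
      using tendsto_diff[OF tendsto_minus[OF mT] tendsto_mult[OF tendsto_const[of 2] tendsto_mult[OF mT T(1)]]]
      by simp
    show "(\<lambda>n. - (real (m n) * T n)) \<longlonglongrightarrow> - c"
      using tendsto_minus[OF mT] .
    show "\<forall>\<^sub>F n in sequentially. - (real (m n) * T n) - 2 * ((real (m n) * T n) * T n)
                                  \<le> real (m n) * ln (1 - T n)"
      using small
    proof eventually_elim
      case (elim n)
      have "- T n - 2 * (T n)^2 \<le> ln (1 - T n)"
        using elim T(2) by (intro ln_one_minus_pos_lower_bound) auto
      then have "real (m n) * (- T n - 2 * (T n)^2) \<le> real (m n) * ln (1 - T n)"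
        by (rule mult_left_mono) simp
      then show ?case by (simp add: algebra_simps power2_eq_square)
    qed
    show "\<forall>\<^sub>F n in sequentially. real (m n) * ln (1 - T n) \<le> - (real (m n) * T n)"
      using small
    proof eventually_elim
      case (elim n)
      have "ln (1 - T n) \<le> - T n"
        using elim T(2) by (intro ln_one_minus_pos_upper_bound) auto
      then have "real (m n) * ln (1 - T n) \<le> real (m n) * (- T n)"
        by (rule mult_left_mono) simp
      then show ?case by simp
    qed
  qed
  then have "(\<lambda>n. exp (real (m n) * ln (1 - T n))) \<longlonglongrightarrow> exp (- c)"
    by (rule tendsto_exp)
  moreover have "\<forall>\<^sub>F n in sequentially. exp (real (m n) * ln (1 - T n)) = (1 - T n) ^ m n"
    using small
  proof eventually_elim
    case (elim n)
    have "exp (real (m n) * ln (1 - T n)) = exp (ln (1 - T n)) ^ m n"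
      by (rule exp_of_nat_mult)
    then show ?case using elim by simp
  qed
  ultimately show ?thesis by (rule Lim_transform_eventually)
qed

lemma sum_sym_binom_upto_threshold:
  assumes "nat (\<lfloor>s\<rfloor> + 1) \<le> l"
  shows "(\<Sum>k | k \<le> l \<and> real k \<le> s. sym_binom l k) = 1 - (\<Sum>k = nat (\<lfloor>s\<rfloor> + 1)..l. sym_binom l k)"
proof -
  define a where "a = nat (\<lfloor>s\<rfloor> + 1)"
  have al: "a \<le> l" using assms by (simp add: a_def)
  have iff: "real k \<le> s \<longleftrightarrow> k < a" for k
  proof -
    have "real k \<le> s \<longleftrightarrow> int k \<le> \<lfloor>s\<rfloor>" by (simp add: le_floor_iff)
    also have "\<dots> \<longleftrightarrow> k < a" by (simp add: a_def zless_nat_eq_int_zless)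
    finally show ?thesis .
  qed
  have "{k. k \<le> l \<and> real k \<le> s} = {..<a}"
    unfolding iff using al by auto
  moreover have "{..l} = {..<a} \<union> {a..l}"
    using al by auto
  then have "(\<Sum>k\<le>l. sym_binom l k) = (\<Sum>k<a. sym_binom l k) + (\<Sum>k=a..l. sym_binom l k)"
    by (simp add: sum.union_disjoint ivl_disj_int)
  ultimately show ?thesis
    unfolding a_def[symmetric] using sum_sym_binom[of l] by simp
qed

lemma sym_binom_power_tendsto:
  fixes l m :: "nat \<Rightarrow> nat" and u :: "nat \<Rightarrow> real"
  assumes l_at_top: "filterlim l at_top sequentially"
    and u_at_top: "filterlim u at_top sequentially"
    and u_cube_small: "(\<lambda>n. u n ^ 3 / sqrt (real (l n))) \<longlonglongrightarrow> 0"
    and expected_exceedances: "(\<lambda>n. real (m n) * exp (- (u n ^ 2) / 2) / (sqrt (2 * pi) * u n)) \<longlonglongrightarrow> c"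
  shows "(\<lambda>n. (\<Sum>k | k \<le> l n \<and> real k \<le> real (l n) / 2 + sqrt (real (l n)) / 2 * u n.
                 sym_binom (l n) k) ^ m n) \<longlonglongrightarrow> exp (- c)"
proof -
  define s where "s n = real (l n) / 2 + sqrt (real (l n)) / 2 * u n" for n
  define T where "T n = (\<Sum>k = nat (\<lfloor>s n\<rfloor> + 1)..l n. sym_binom (l n) k)" for n
  have tail: "(\<lambda>n. T n * u n * exp (u n ^ 2 / 2)) \<longlonglongrightarrow> 1 / sqrt (2 * pi)"
    unfolding T_def s_def by (rule sym_binom_tail_above_threshold[OF l_at_top u_at_top u_cube_small])
  have u_small: "(\<lambda>n. u n / sqrt (real (l n))) \<longlonglongrightarrow> 0"
    using u_at_top by (intro tendsto_div_of_cube_div[OF u_cube_small]) (auto simp: filterlim_at_top)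
  have "\<forall>\<^sub>F n in sequentially. 1 \<le> u n"
    using u_at_top unfolding filterlim_at_top by blast
  moreover have "\<forall>\<^sub>F n in sequentially. 16 \<le> real (l n)"
    using filterlim_compose[OF filterlim_real_sequentially l_at_top] unfolding filterlim_at_top o_def by blast
  moreover have "\<forall>\<^sub>F n in sequentially. u n / sqrt (real (l n)) < 1/4"
    by (rule order_tendstoD(2)[OF u_small]) simp
  ultimately have ev: "\<forall>\<^sub>F n in sequentially. 1 \<le> u n \<and> 16 \<le> real (l n) \<and> u n / sqrt (real (l n)) < 1/4"
    by eventually_elim blast
  have "(\<lambda>n. (T n * u n * exp (u n ^ 2 / 2)) * sqrt (2 * pi)
              * (real (m n) * exp (- (u n ^ 2) / 2) / (sqrt (2 * pi) * u n)))
          \<longlonglongrightarrow> 1 / sqrt (2 * pi) * sqrt (2 * pi) * c"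
    by (intro tendsto_intros tail expected_exceedances)
  moreover have "\<forall>\<^sub>F n in sequentially.
      (T n * u n * exp (u n ^ 2 / 2)) * sqrt (2 * pi) * (real (m n) * exp (- (u n ^ 2) / 2) / (sqrt (2 * pi) * u n))
        = real (m n) * T n"
    using ev by eventually_elim (simp add: field_simps flip: exp_add)
  ultimately have mT: "(\<lambda>n. real (m n) * T n) \<longlonglongrightarrow> c"
    by (simp add: Lim_transform_eventually)
  have "filterlim (\<lambda>n. u n * exp (u n ^ 2 / 2)) at_top sequentially"
    by (rule filterlim_at_top_mono[OF u_at_top]) (use ev in \<open>eventually_elim, simp\<close>)
  then have "(\<lambda>n. T n * u n * exp (u n ^ 2 / 2) / (u n * exp (u n ^ 2 / 2))) \<longlonglongrightarrow> 0"
    by (intro tendsto_divide_0[OF tail] filterlim_at_top_imp_at_infinity)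
  moreover have "\<forall>\<^sub>F n in sequentially. T n * u n * exp (u n ^ 2 / 2) / (u n * exp (u n ^ 2 / 2)) = T n"
    using ev by eventually_elim simp
  ultimately have "T \<longlonglongrightarrow> 0"
    by (simp add: Lim_transform_eventually)
  then have "(\<lambda>n. (1 - T n) ^ m n) \<longlonglongrightarrow> exp (- c)"
    by (rule tendsto_one_minus_power[OF mT]) (simp add: T_def sum_nonneg sym_binom_nonneg)
  moreover have "\<forall>\<^sub>F n in sequentially.
      (1 - T n) ^ m n = (\<Sum>k | k \<le> l n \<and> real k \<le> s n. sym_binom (l n) k) ^ m n"
    using ev
  proof eventually_elim
    case (elim n)
    then have sqrt_pos: "sqrt (real (l n)) > 0" by simp
    have "u n / sqrt (real (l n)) < 1/4" using elim by blast
    then have "u n \<le> sqrt (real (l n)) / 4"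
      unfolding pos_divide_less_eq[OF sqrt_pos] by simp
    then have "sqrt (real (l n)) * u n \<le> sqrt (real (l n)) * (sqrt (real (l n)) / 4)"
      using sqrt_pos by (intro mult_left_mono) auto
    then have "sqrt (real (l n)) * u n \<le> real (l n) / 4" by simp
    moreover have "16 \<le> real (l n)" using elim by blast
    moreover have "s n = real (l n) / 2 + (sqrt (real (l n)) * u n) / 2" by (simp add: s_def)
    ultimately have "real_of_int \<lfloor>s n\<rfloor> + 1 \<le> real (l n)"
      using of_int_floor_le[of "s n"] by linarith
    then have "nat (\<lfloor>s n\<rfloor> + 1) \<le> l n" by linarith
    then show ?case by (simp add: T_def sum_sym_binom_upto_threshold)
  qed
  ultimately show ?thesis unfolding s_def by (simp add: Lim_transform_eventually)
qed

section \<open>Counting on the cube\<close>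

lemma finite_cube: "finite (cube n)"
  unfolding cube_def by (intro finite_PiE) auto

lemma card_cube: "card (cube n) = 2 ^ n"
  unfolding cube_def by (simp add: card_PiE numeral_2_eq_2)

lemma cube_nonempty: "cube n \<noteq> {}"
  unfolding cube_def by (simp add: PiE_eq_empty_iff)

lemma mem_cube: "\<omega> \<in> cube n \<longleftrightarrow> (\<forall>i<n. \<omega> i \<in> {0, 1}) \<and> (\<forall>i. n \<le> i \<longrightarrow> \<omega> i = undefined)"
  unfolding cube_def PiE_iff extensional_def by auto

lemma restrict_mem_cube: "\<omega> \<in> cube (a + b) \<Longrightarrow> restrict \<omega> {..<a} \<in> cube a"
  by (force simp: mem_cube)

lemma shift_mem_cube: "\<omega> \<in> cube (a + b) \<Longrightarrow> (\<lambda>i\<in>{..<b}. \<omega> (a + i)) \<in> cube b"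
  by (auto simp: mem_cube)

lemma card_cube_split:
  "card {\<omega> \<in> cube (a + b). Q (restrict \<omega> {..<a}) \<and> R (\<lambda>i\<in>{..<b}. \<omega> (a + i))}
     = card {x \<in> cube a. Q x} * card {y \<in> cube b. R y}"
proof -
  let ?S = "{\<omega> \<in> cube (a + b). Q (restrict \<omega> {..<a}) \<and> R (\<lambda>i\<in>{..<b}. \<omega> (a + i))}"
  let ?T = "{x \<in> cube a. Q x} \<times> {y \<in> cube b. R y}"
  define join :: "(nat \<Rightarrow> nat) \<times> (nat \<Rightarrow> nat) \<Rightarrow> nat \<Rightarrow> nat" where
    "join = (\<lambda>(x, y) i. if i < a then x i else if i < a + b then y (i - a) else undefined)"
  have "bij_betw (\<lambda>\<omega>. (restrict \<omega> {..<a}, \<lambda>i\<in>{..<b}. \<omega> (a + i))) ?S ?T"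
  proof (rule bij_betw_byWitness[where f' = join])
    have "restrict (join (x, y)) {..<a} = x" "(\<lambda>i\<in>{..<b}. join (x, y) (a + i)) = y"
      and "join (x, y) \<in> cube (a + b)"
      if "x \<in> cube a" "y \<in> cube b" for x y
      using that by (auto simp: join_def mem_cube)
    then show "\<forall>p\<in>?T. (restrict (join p) {..<a}, \<lambda>i\<in>{..<b}. join p (a + i)) = p"
      and "join ` ?T \<subseteq> ?S"
      by auto
    show "\<forall>\<omega>\<in>?S. join (restrict \<omega> {..<a}, \<lambda>i\<in>{..<b}. \<omega> (a + i)) = \<omega>"
      by (auto simp: join_def mem_cube fun_eq_iff)
    show "(\<lambda>\<omega>. (restrict \<omega> {..<a}, \<lambda>i\<in>{..<b}. \<omega> (a + i))) ` ?S \<subseteq> ?T"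
      using restrict_mem_cube shift_mem_cube by auto
  qed
  then show ?thesis
    by (simp add: bij_betw_same_card card_cartesian_product)
qed

definition blocks_le :: "nat \<Rightarrow> nat \<Rightarrow> real \<Rightarrow> (nat \<Rightarrow> nat) \<Rightarrow> bool" where
  "blocks_le l m s \<omega> \<longleftrightarrow> (\<forall>j\<in>{1..m}. real (\<Sum>i\<in>{(j - 1) * l..<j * l}. \<omega> i) \<le> s)"

lemma blocks_le_restrict:
  assumes "m * l \<le> n"
  shows "blocks_le l m s (restrict \<omega> {..<n}) \<longleftrightarrow> blocks_le l m s \<omega>"
proof -
  have "(\<Sum>i\<in>{(j - 1) * l..<j * l}. restrict \<omega> {..<n} i) = (\<Sum>i\<in>{(j - 1) * l..<j * l}. \<omega> i)"
    if "j \<in> {1..m}" for j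
  proof (rule sum.cong)
    fix i assume "i \<in> {(j - 1) * l..<j * l}"
    then have "i < j * l" by simp
    moreover have "j * l \<le> m * l" using that by (intro mult_le_mono1) simp
    ultimately have "i < n" using assms by linarith
    then show "restrict \<omega> {..<n} i = \<omega> i" by simp
  qed simp
  then show ?thesis unfolding blocks_le_def by simp
qed

lemma card_blocks_le:
  "card {\<omega> \<in> cube (m * l). blocks_le l m s \<omega>} = card {x \<in> cube l. real (\<Sum>i<l. x i) \<le> s} ^ m"
proof (induction m)
  case 0
  have "{\<omega> \<in> cube (0 * l). blocks_le l 0 s \<omega>} = cube 0" by (auto simp: blocks_le_def)
  then show ?case by (simp add: card_cube)
next
  case (Suc m)
  let ?R = "\<lambda>y. real (\<Sum>i<l. y i) \<le> s"
  have last_block: "(\<Sum>i\<in>{m * l..<Suc m * l}. \<omega> i) = (\<Sum>i<l. (\<lambda>i\<in>{..<l}. \<omega> (m * l + i)) i)"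
    for \<omega> :: "nat \<Rightarrow> nat"
    by (simp add: sum.atLeastLessThan_shift_0[of _ "m * l"] atLeast0LessThan)
  have "blocks_le l (Suc m) s \<omega>
          \<longleftrightarrow> blocks_le l m s (restrict \<omega> {..<m * l}) \<and> ?R (\<lambda>i\<in>{..<l}. \<omega> (m * l + i))" for \<omega>
    unfolding blocks_le_restrict[OF order_refl] last_block[symmetric]
    by (auto simp: blocks_le_def atLeastAtMostSuc_conv)
  then have "card {\<omega> \<in> cube (Suc m * l). blocks_le l (Suc m) s \<omega>}
      = card {\<omega> \<in> cube (m * l + l). blocks_le l m s (restrict \<omega> {..<m * l}) \<and> ?R (\<lambda>i\<in>{..<l}. \<omega> (m * l + i))}"
    by (simp add: add.commute)
  also have "\<dots> = card {x \<in> cube (m * l). blocks_le l m s x} * card {y \<in> cube l. ?R y}"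
    by (rule card_cube_split)
  finally show ?case using Suc.IH by simp
qed

lemma card_cube_sum_eq: "card {x \<in> cube l. (\<Sum>i<l. x i) = k} = l choose k"
proof -
  have sum_eq_card: "(\<Sum>i<l. x i) = card {i\<in>{..<l}. x i = 1}" if "x \<in> cube l" for x
  proof -
    have "(\<Sum>i<l. x i) = (\<Sum>i<l. of_bool (x i = 1))"
      using that by (intro sum.cong) (auto simp: mem_cube)
    then show ?thesis by (simp add: Int_def)
  qed
  define indicator_fun where
    "indicator_fun A = (\<lambda>i\<in>{..<l}. if i \<in> A then 1 else (0::nat))" for A :: "nat set"
  have "bij_betw (\<lambda>x. {i\<in>{..<l}. x i = 1}) {x \<in> cube l. (\<Sum>i<l. x i) = k}
          {A. A \<subseteq> {..<l} \<and> card A = k}"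
  proof (rule bij_betw_byWitness[where f' = indicator_fun])
    have ind: "indicator_fun A \<in> cube l" "{i\<in>{..<l}. indicator_fun A i = 1} = A \<inter> {..<l}" for A
      by (auto simp: indicator_fun_def mem_cube)
    show "\<forall>A\<in>{A. A \<subseteq> {..<l} \<and> card A = k}. {i\<in>{..<l}. indicator_fun A i = 1} = A"
      using ind by auto
    show "indicator_fun ` {A. A \<subseteq> {..<l} \<and> card A = k} \<subseteq> {x \<in> cube l. (\<Sum>i<l. x i) = k}"
      using ind sum_eq_card by (auto simp: Int_absorb2)
    show "\<forall>x\<in>{x \<in> cube l. (\<Sum>i<l. x i) = k}. indicator_fun {i\<in>{..<l}. x i = 1} = x"
      by (auto simp: indicator_fun_def mem_cube fun_eq_iff)
    show "(\<lambda>x. {i\<in>{..<l}. x i = 1}) ` {x \<in> cube l. (\<Sum>i<l. x i) = k} \<subseteq> {A. A \<subseteq> {..<l} \<and> card A = k}"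
      using sum_eq_card by auto
  qed
  then show ?thesis
    using n_subsets[of "{..<l}" k] by (simp add: bij_betw_same_card)
qed

lemma card_cube_sum_le:
  "card {x \<in> cube l. real (\<Sum>i<l. x i) \<le> s} = (\<Sum>k | k \<le> l \<and> real k \<le> s. l choose k)"
proof -
  have "(\<Sum>i<l. x i) \<le> (\<Sum>i<l. 1)" if "x \<in> cube l" for x
    using that by (intro sum_mono) (auto simp: mem_cube)
  then have "{x \<in> cube l. real (\<Sum>i<l. x i) \<le> s}
               = (\<Union>k\<in>{k. k \<le> l \<and> real k \<le> s}. {x \<in> cube l. (\<Sum>i<l. x i) = k})"
    by auto
  moreover have "card (\<Union>k\<in>{k. k \<le> l \<and> real k \<le> s}. {x \<in> cube l. (\<Sum>i<l. x i) = k})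
                   = (\<Sum>k | k \<le> l \<and> real k \<le> s. card {x \<in> cube l. (\<Sum>i<l. x i) = k})"
    by (rule card_UN_disjoint) (auto simp: finite_cube)
  ultimately show ?thesis by (simp add: card_cube_sum_eq)
qed

lemma prob_max_block_le:
  assumes "1 \<le> nblocks lam n"
  shows "measure_pmf.prob (pmf_of_set (cube n)) {\<omega>. real (max_block lam n \<omega>) \<le> s}
       = (\<Sum>k | k \<le> blen lam n \<and> real k \<le> s. sym_binom (blen lam n) k) ^ nblocks lam n"
proof -
  define l where "l = blen lam n"
  define m where "m = nblocks lam n"
  have ml: "m * l \<le> n"
    unfolding m_def l_def nblocks_def by simp
  have "real (max_block lam n \<omega>) \<le> s \<longleftrightarrow> blocks_le l m s \<omega>" for \<omega>
  proof -
    have "real (max_block lam n \<omega>) = Max (real ` block_sum lam n \<omega> ` {1..m})"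
      unfolding max_block_def m_def[symmetric] using assms
      by (intro mono_Max_commute) (auto simp: mono_def m_def)
    then show ?thesis
      using assms by (auto simp: blocks_le_def block_sum_def l_def m_def)
  qed
  then have event: "cube n \<inter> {\<omega>. real (max_block lam n \<omega>) \<le> s} = {\<omega> \<in> cube n. blocks_le l m s \<omega>}"
    by auto
  have "card {\<omega> \<in> cube (m * l + (n - m * l)). blocks_le l m s (restrict \<omega> {..<m * l})
                                             \<and> (\<lambda>_. True) (\<lambda>i\<in>{..<n - m * l}. \<omega> (m * l + i))}
          = card {x \<in> cube (m * l). blocks_le l m s x} * card {y \<in> cube (n - m * l). True}"
    by (rule card_cube_split)
  then have "card {\<omega> \<in> cube n. blocks_le l m s \<omega>}
               = card {x \<in> cube l. real (\<Sum>i<l. x i) \<le> s} ^ m * 2 ^ (n - m * l)"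
    using ml by (simp add: blocks_le_restrict card_blocks_le card_cube)
  moreover have "(2::real) ^ n = (2 ^ l) ^ m * 2 ^ (n - m * l)"
    using ml by (simp add: mult.commute flip: power_add power_mult)
  ultimately have "measure_pmf.prob (pmf_of_set (cube n)) {\<omega>. real (max_block lam n \<omega>) \<le> s}
               = (real (card {x \<in> cube l. real (\<Sum>i<l. x i) \<le> s}) / 2 ^ l) ^ m"
    by (simp add: measure_pmf_of_set finite_cube cube_nonempty event card_cube power_divide)
  also have "real (card {x \<in> cube l. real (\<Sum>i<l. x i) \<le> s}) / 2 ^ l
               = (\<Sum>k | k \<le> l \<and> real k \<le> s. sym_binom l k)"
    by (simp only: card_cube_sum_le) (simp add: sym_binom_def sum_divide_distrib)
  finally show ?thesis unfolding l_def m_def .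
qed

lemma powr_at_top_sequentially:
  assumes "0 < lam"
  shows "filterlim (\<lambda>n. real n powr lam) at_top sequentially"
proof -
  have "filterlim (\<lambda>x::real. x powr lam) at_top at_top" using assms by real_asymp
  then show ?thesis by (rule filterlim_compose[OF _ filterlim_real_sequentially])
qed

lemma blen_bounds:
  assumes "0 < lam" "1 \<le> n"
  shows "real n powr lam - 1 < real (blen lam n)" "real (blen lam n) \<le> real n powr lam"
proof -
  have "1 \<le> real n powr lam" using assms by (intro ge_one_powr_ge_zero) auto
  then have "real (blen lam n) = real_of_int \<lfloor>real n powr lam\<rfloor>" by (simp add: blen_def)
  then show "real n powr lam - 1 < real (blen lam n)" "real (blen lam n) \<le> real n powr lam"
    by linarith+
qed

lemma blen_at_top:
  assumes "0 < lam"
  shows "filterlim (blen lam) at_top sequentially"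
proof -
  have "filterlim (\<lambda>n. real n powr lam - 1) at_top sequentially"
    by (rule filterlim_tendsto_add_at_top[OF tendsto_const powr_at_top_sequentially[OF assms], of "-1", simplified])
  moreover have "\<forall>\<^sub>F n in sequentially. real n powr lam - 1 \<le> real (blen lam n)"
    using eventually_ge_at_top[of "1::nat"]
    by eventually_elim (simp add: less_imp_le blen_bounds(1)[OF assms])
  ultimately have real_blen: "filterlim (\<lambda>n. real (blen lam n)) at_top sequentially"
    by (rule filterlim_at_top_mono)
  show ?thesis
    unfolding filterlim_at_top
  proof
    fix Z :: nat
    have "\<forall>\<^sub>F n in sequentially. real Z \<le> real (blen lam n)"
      using real_blen unfolding filterlim_at_top by blast
    then show "\<forall>\<^sub>F n in sequentially. Z \<le> blen lam n" by simp
  qed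
qed

lemma nblocks_bounds:
  assumes "0 < lam" "1 \<le> n" "2 \<le> real n powr lam"
  shows "1 - real n powr lam / real n \<le> real (nblocks lam n) * real n powr lam / real n"
    and "real (nblocks lam n) * real n powr lam / real n \<le> real n powr lam / (real n powr lam - 1)"
proof -
  define p where "p = real n powr lam"
  define l where "l = real (blen lam n)"
  have l: "p - 1 < l" "l \<le> p" using blen_bounds[OF assms(1,2)] by (simp_all add: p_def l_def)
  have n: "real n > 0" using assms by simp
  have "real (nblocks lam n) = real_of_int \<lfloor>real n / l\<rfloor>"
    unfolding nblocks_def l_def floor_divide_of_nat_eq by simp
  then have m: "real n / l - 1 < real (nblocks lam n)" "real (nblocks lam n) \<le> real n / l"
    by linarith+
  have "1 - p / real n \<le> p / l - p / real n"
    using l assms(3) by (simp add: p_def field_simps)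
  also have "\<dots> = (real n / l - 1) * p / real n"
    using n l assms(3) by (simp add: p_def field_simps)
  also have "\<dots> \<le> real (nblocks lam n) * p / real n"
    using m n assms(3) by (intro divide_right_mono mult_right_mono) (auto simp: p_def)
  finally show "1 - real n powr lam / real n \<le> real (nblocks lam n) * real n powr lam / real n"
    by (simp add: p_def)
  have "real (nblocks lam n) * p / real n \<le> (real n / l) * p / real n"
    using m n assms(3) by (intro divide_right_mono mult_right_mono) (auto simp: p_def)
  also have "\<dots> = p / l"
    using n l assms(3) by (simp add: p_def field_simps)
  also have "\<dots> \<le> p / (p - 1)"
    using l assms(3) by (intro divide_left_mono) (auto simp: p_def)
  finally show "real (nblocks lam n) * real n powr lam / real n \<le> real n powr lam / (real n powr lam - 1)"
    by (simp add: p_def)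
qed

lemma nblocks_asymp:
  assumes "0 < lam" "lam < 1"
  shows "(\<lambda>n. real (nblocks lam n) * real n powr lam / real n) \<longlonglongrightarrow> 1"
proof (rule tendsto_sandwich)
  have "\<forall>\<^sub>F n in sequentially. 2 \<le> real n powr lam"
    using powr_at_top_sequentially[OF assms(1)] unfolding filterlim_at_top by blast
  with eventually_ge_at_top[of "1::nat"]
  have ev: "\<forall>\<^sub>F n in sequentially. 1 \<le> n \<and> 2 \<le> real n powr lam"
    by eventually_elim simp
  show "\<forall>\<^sub>F n in sequentially. 1 - real n powr lam / real n \<le> real (nblocks lam n) * real n powr lam / real n"
    using ev by eventually_elim (simp add: nblocks_bounds(1)[OF assms(1)])
  show "\<forall>\<^sub>F n in sequentially. real (nblocks lam n) * real n powr lam / real n \<le> real n powr lam / (real n powr lam - 1)"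
    using ev by eventually_elim (simp add: nblocks_bounds(2)[OF assms(1)])
  have "((\<lambda>x::real. 1 - x powr lam / x) \<longlongrightarrow> 1) at_top" using assms by real_asymp
  then show "(\<lambda>n. 1 - real n powr lam / real n) \<longlonglongrightarrow> 1"
    by (rule filterlim_compose[OF _ filterlim_real_sequentially])
  have "((\<lambda>x::real. x / (x - 1)) \<longlongrightarrow> 1) at_top" by real_asymp
  then show "(\<lambda>n. real n powr lam / (real n powr lam - 1)) \<longlonglongrightarrow> 1"
    by (rule filterlim_compose[OF _ powr_at_top_sequentially[OF assms(1)]])
qed

lemma eventually_nblocks_pos:
  assumes "0 < lam" "lam < 1"
  shows "\<forall>\<^sub>F n in sequentially. 1 \<le> nblocks lam n"
proof -
  have "\<forall>\<^sub>F n in sequentially. 1/2 < real (nblocks lam n) * real n powr lam / real n"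
    by (rule order_tendstoD(1)[OF nblocks_asymp[OF assms]]) simp
  then show ?thesis
  proof eventually_elim
    case (elim n)
    then show ?case by (cases "nblocks lam n") auto
  qed
qed

definition thresh_dev :: "real \<Rightarrow> real \<Rightarrow> nat \<Rightarrow> real" where
  "thresh_dev lam \<beta> n = sqrt (2 * (1 - lam) * ln (real n) - ln (ln (real n))
                               - 2 * ln (sqrt (4 * pi * (1 - lam)) * ln (1 / \<beta>)))"

lemma thresh_eq:
  "thresh lam \<beta> n = real (blen lam n) / 2 + sqrt (real (blen lam n)) / 2 * thresh_dev lam \<beta> n"
  unfolding thresh_def thresh_dev_def ..

lemma thresh_dev_at_top:
  assumes "lam < 1"
  shows "filterlim (thresh_dev lam \<beta>) at_top sequentially"
proof -
  define K where "K = ln (sqrt (4 * pi * (1 - lam)) * ln (1 / \<beta>))"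
  define D where "D x = 2 * (1 - lam) * ln x - ln (ln x) - 2 * K" for x :: real
  have "filterlim D at_top at_top"
    using assms unfolding D_def by real_asymp
  moreover have "thresh_dev lam \<beta> = (\<lambda>n. sqrt (D (real n)))"
    by (simp add: fun_eq_iff thresh_dev_def D_def K_def)
  ultimately show ?thesis
    using filterlim_compose[OF sqrt_at_top filterlim_compose[OF _ filterlim_real_sequentially]] by simp
qed

lemma thresh_dev_cube_small:
  assumes "0 < lam" "lam < 1"
  shows "(\<lambda>n. thresh_dev lam \<beta> n ^ 3 / sqrt (real (blen lam n))) \<longlonglongrightarrow> 0"
proof -
  define K where "K = ln (sqrt (4 * pi * (1 - lam)) * ln (1 / \<beta>))"
  define D where "D x = 2 * (1 - lam) * ln x - ln (ln x) - 2 * K" for x :: real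
  have "((\<lambda>x. D x * sqrt (D x) / sqrt (x powr lam / 2)) \<longlongrightarrow> 0) at_top"
    using assms unfolding D_def by real_asymp
  then have lim: "(\<lambda>n. D (real n) * sqrt (D (real n)) / sqrt (real n powr lam / 2)) \<longlonglongrightarrow> 0"
    by (rule filterlim_compose[OF _ filterlim_real_sequentially])
  have "filterlim D at_top at_top"
    using assms unfolding D_def by real_asymp
  from filterlim_compose[OF this filterlim_real_sequentially]
  have "\<forall>\<^sub>F n in sequentially. 0 \<le> D (real n)"
    unfolding filterlim_at_top by blast
  moreover have "\<forall>\<^sub>F n in sequentially. 2 \<le> real n powr lam"
    using powr_at_top_sequentially[OF assms(1)] unfolding filterlim_at_top by blast
  ultimately have ev: "\<forall>\<^sub>F n in sequentially. 0 \<le> D (real n) \<and> 1 \<le> n \<and> 2 \<le> real n powr lam"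
    using eventually_ge_at_top[of "1::nat"] by eventually_elim simp
  show ?thesis
  proof (rule tendsto_sandwich[OF _ _ tendsto_const lim])
    have u: "thresh_dev lam \<beta> n = sqrt (D (real n))" for n
      by (simp add: thresh_dev_def D_def K_def)
    show "\<forall>\<^sub>F n in sequentially. 0 \<le> thresh_dev lam \<beta> n ^ 3 / sqrt (real (blen lam n))"
      using ev by eventually_elim (simp add: u)
    show "\<forall>\<^sub>F n in sequentially. thresh_dev lam \<beta> n ^ 3 / sqrt (real (blen lam n))
                                 \<le> D (real n) * sqrt (D (real n)) / sqrt (real n powr lam / 2)"
      using ev
    proof eventually_elim
      case (elim n)
      have "thresh_dev lam \<beta> n ^ 3 = D (real n) * sqrt (D (real n))"
        using elim by (simp add: u power3_eq_cube)
      moreover have "sqrt (real n powr lam / 2) \<le> sqrt (real (blen lam n))"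
        using elim blen_bounds[OF assms(1), of n] by (intro real_sqrt_le_mono) auto
      moreover have "0 < sqrt (real n powr lam / 2)" using elim by simp
      ultimately show ?case
        using elim by (simp add: divide_left_mono)
    qed
  qed
qed

lemma nblocks_gauss_tail:
  assumes "0 < lam" "lam < 1" "0 < \<beta>" "\<beta> < 1"
  shows "(\<lambda>n. real (nblocks lam n) * exp (- (thresh_dev lam \<beta> n ^ 2) / 2)
                / (sqrt (2 * pi) * thresh_dev lam \<beta> n)) \<longlonglongrightarrow> ln (1 / \<beta>)"
proof -
  define K where "K = ln (sqrt (4 * pi * (1 - lam)) * ln (1 / \<beta>))"
  define D where "D x = 2 * (1 - lam) * ln x - ln (ln x) - 2 * K" for x :: real
  have eK: "exp K = sqrt (4 * pi * (1 - lam)) * ln (1 / \<beta>)"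
    using assms by (simp add: K_def)
  have "((\<lambda>x. D x / ln x) \<longlongrightarrow> 2 * (1 - lam)) at_top"
    using assms unfolding D_def by real_asymp
  then have "(\<lambda>n. D (real n) / ln (real n)) \<longlonglongrightarrow> 2 * (1 - lam)"
    by (rule filterlim_compose[OF _ filterlim_real_sequentially])
  then have "(\<lambda>n. (real (nblocks lam n) * real n powr lam / real n) * exp K
                  / (sqrt (2 * pi) * sqrt (D (real n) / ln (real n))))
               \<longlonglongrightarrow> 1 * exp K / (sqrt (2 * pi) * sqrt (2 * (1 - lam)))"
    using assms by (intro tendsto_intros nblocks_asymp) auto
  moreover have "1 * exp K / (sqrt (2 * pi) * sqrt (2 * (1 - lam))) = ln (1 / \<beta>)"
    using assms by (simp add: eK field_simps flip: real_sqrt_mult)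
  moreover have "filterlim D at_top at_top"
    using assms unfolding D_def by real_asymp
  from filterlim_compose[OF this filterlim_real_sequentially]
  have "\<forall>\<^sub>F n in sequentially. 1 \<le> D (real n)"
    unfolding filterlim_at_top by blast
  with eventually_ge_at_top[of "2::nat"]
  have "\<forall>\<^sub>F n in sequentially.
          (real (nblocks lam n) * real n powr lam / real n) * exp K / (sqrt (2 * pi) * sqrt (D (real n) / ln (real n)))
            = real (nblocks lam n) * exp (- (thresh_dev lam \<beta> n ^ 2) / 2) / (sqrt (2 * pi) * thresh_dev lam \<beta> n)"
  proof eventually_elim
    case (elim n)
    then have ln_pos: "0 < ln (real n)" by simp
    have u: "thresh_dev lam \<beta> n = sqrt (D (real n))"
      by (simp add: thresh_dev_def D_def K_def)
    \<comment> \<open>the threshold is chosen so that exp (- u^2 / 2) = n^(lam - 1) sqrt (ln n) exp K\<close>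
    have "- D (real n) / 2 = (lam * ln (real n) - ln (real n)) + ln (ln (real n)) / 2 + K"
      by (simp add: D_def field_simps)
    then have "exp (- D (real n) / 2)
                 = exp (lam * ln (real n)) / exp (ln (real n)) * exp (ln (ln (real n)) / 2) * exp K"
      by (simp add: exp_add exp_diff)
    also have "\<dots> = real n powr lam / real n * sqrt (ln (real n)) * exp K"
    proof -
      have "exp (ln (ln (real n)) / 2) = sqrt (ln (real n))"
        using ln_pos by (simp add: powr_def flip: powr_half_sqrt)
      then show ?thesis using elim by (simp add: powr_def)
    qed
    finally have "exp (- (thresh_dev lam \<beta> n ^ 2) / 2) = real n powr lam / real n * sqrt (ln (real n)) * exp K"
      using elim by (simp add: u)
    then show ?case
      using elim ln_pos by (simp add: u real_sqrt_divide field_simps)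
  qed
  ultimately show ?thesis by (simp add: Lim_transform_eventually)
qed

theorem lemma2p2:
  fixes lam \<beta> :: real
  assumes "0 < lam" "lam < 1" "0 < \<beta>" "\<beta> < 1"
  shows "(\<lambda>n. measure_pmf.prob (pmf_of_set (cube n))
            {\<omega>. real (max_block lam n \<omega>) \<le> thresh lam \<beta> n}) \<longlonglongrightarrow> \<beta>"
proof -
  have "(\<lambda>n. (\<Sum>k | k \<le> blen lam n \<and> real k \<le> thresh lam \<beta> n. sym_binom (blen lam n) k) ^ nblocks lam n)
          \<longlonglongrightarrow> exp (- ln (1 / \<beta>))"
    unfolding thresh_eq using assms
    by (intro sym_binom_power_tendsto blen_at_top thresh_dev_at_top thresh_dev_cube_small nblocks_gauss_tail)
  moreover have "exp (- ln (1 / \<beta>)) = \<beta>"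
    using assms by (simp add: ln_div)
  moreover have "\<forall>\<^sub>F n in sequentially.
      (\<Sum>k | k \<le> blen lam n \<and> real k \<le> thresh lam \<beta> n. sym_binom (blen lam n) k) ^ nblocks lam n
        = measure_pmf.prob (pmf_of_set (cube n)) {\<omega>. real (max_block lam n \<omega>) \<le> thresh lam \<beta> n}"
    using eventually_nblocks_pos[OF assms(1,2)] by eventually_elim (rule prob_max_block_le[symmetric])
  ultimately show ?thesis by (simp add: Lim_transform_eventually)
qed

end
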